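(* Let $\omega=e^{2\pi i/3}$ and consider the six three-qubit states $$\tfrac{1}{\sqrt3}(|001\rangle+|010\rangle+|100\rangle),\ \tfrac{1}{\sqrt3}(|001\rangle+\omega|010\rangle+\omega^2|100\rangle),\ \tfrac{1}{\sqrt3}(|001\rangle+\omega^2|010\rangle+\omega|100\rangle),$$ $$\tfrac{1}{\sqrt3}(|000\rangle+|101\rangle+|110\rangle),\ \tfrac{1}{\sqrt3}(|000\rangle+\omega|101\rangle+\omega^2|110\rangle),\ \tfrac{1}{\sqrt3}(|000\rangle+\omega^2|101\rangle+\omega|110\rangle).$$ These states are mutually orthogonal, each is genuinely entangled and belongs to the W-class, and they form an unextendible entangled basis of $\mathbb{C}^2\otimes\mathbb{C}^2\otimes\mathbb{C}^2$. Moreover, the unextendibility is conserved across every bipartition: for each bipartition $A|BC$, $B|AC$, $C|AB$, the orthogonal complement of their span contains no pure state that is entangled with respect to that bipartition.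
   Context: $|v_1v_2v_3\rangle$ denotes $|v_1\rangle\otimes|v_2\rangle\otimes|v_3\rangle$ in the computational basis. A pure three-qubit state is genuinely entangled if it is not a product state across any bipartition. The W-class is the set of three-qubit pure states that can be obtained from $|W\rangle=\tfrac{1}{\sqrt3}(|001\rangle+|010\rangle+|100\rangle)$ by stochastic LOCC (SLOCC), i.e. by invertible local operators $A\otimes B\otimes C$ up to normalization. An unextendible entangled basis is a set of mutually orthogonal pure entangled states spanning a proper subspace whose orthogonal complement contains no entangled state. *)

theory Defs
  imports Complex_Main
begin

text \<open>Three-qubit pure states (unnormalised vectors of C^2 (x) C^2 (x) C^2) are
  represented as amplitude functions; the computational basis label 0 is False,
  1 is True, and psi x y z is the amplitude of the basis state |xyz>.\<close>

type_synonym qstate = "bool \<Rightarrow> bool \<Rightarrow> bool \<Rightarrow> complex"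
type_synonym qop = "bool \<Rightarrow> bool \<Rightarrow> complex"  \<comment> \<open>2x2 matrix, M row col\<close>

definition ket :: "bool \<Rightarrow> bool \<Rightarrow> bool \<Rightarrow> qstate" where
  "ket a b c = (\<lambda>x y z. if x = a \<and> y = b \<and> z = c then 1 else 0)"

definition qinner :: "qstate \<Rightarrow> qstate \<Rightarrow> complex" where
  "qinner u v = (\<Sum>x\<in>UNIV. \<Sum>y\<in>UNIV. \<Sum>z\<in>UNIV. cnj (u x y z) * v x y z)"

definition fully_product :: "qstate \<Rightarrow> bool" where
  "fully_product \<psi> \<longleftrightarrow> (\<exists>a b c :: bool \<Rightarrow> complex. \<psi> = (\<lambda>x y z. a x * b y * c z))"

definition entangled :: "qstate \<Rightarrow> bool" where
  "entangled \<psi> \<longleftrightarrow> \<psi> \<noteq> (\<lambda>x y z. 0) \<and> \<not> fully_product \<psi>"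

datatype bipartition = A_BC | B_AC | C_AB

definition bi_product :: "bipartition \<Rightarrow> qstate \<Rightarrow> bool" where
  "bi_product P \<psi> = (case P of
      A_BC \<Rightarrow> (\<exists>(a :: bool \<Rightarrow> complex) \<phi>. \<psi> = (\<lambda>x y z. a x * \<phi> y z))
    | B_AC \<Rightarrow> (\<exists>(b :: bool \<Rightarrow> complex) \<phi>. \<psi> = (\<lambda>x y z. b y * \<phi> x z))
    | C_AB \<Rightarrow> (\<exists>(c :: bool \<Rightarrow> complex) \<phi>. \<psi> = (\<lambda>x y z. c z * \<phi> x y)))"

definition bi_entangled :: "bipartition \<Rightarrow> qstate \<Rightarrow> bool" where
  "bi_entangled P \<psi> \<longleftrightarrow> \<psi> \<noteq> (\<lambda>x y z. 0) \<and> \<not> bi_product P \<psi>"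

definition genuinely_entangled :: "qstate \<Rightarrow> bool" where
  "genuinely_entangled \<psi> \<longleftrightarrow> (\<forall>P. bi_entangled P \<psi>)"

definition opmul :: "qop \<Rightarrow> qop \<Rightarrow> qop" where
  "opmul M N = (\<lambda>i j. \<Sum>k\<in>UNIV. M i k * N k j)"

definition op_invertible :: "qop \<Rightarrow> bool" where
  "op_invertible M \<longleftrightarrow> (\<exists>N. opmul M N = (\<lambda>i j. if i = j then 1 else 0)
                           \<and> opmul N M = (\<lambda>i j. if i = j then 1 else 0))"

definition apply_local :: "qop \<Rightarrow> qop \<Rightarrow> qop \<Rightarrow> qstate \<Rightarrow> qstate" where
  "apply_local A B C \<psi> = (\<lambda>x y z. \<Sum>x'\<in>UNIV. \<Sum>y'\<in>UNIV. \<Sum>z'\<in>UNIV.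
       A x x' * B y y' * C z z' * \<psi> x' y' z')"

definition W_state :: qstate where
  "W_state = (\<lambda>x y z. (ket False False True x y z + ket False True False x y z
                        + ket True False False x y z) / complex_of_real (sqrt 3))"

definition in_W_class :: "qstate \<Rightarrow> bool" where
  "in_W_class \<psi> \<longleftrightarrow> (\<exists>A B C (s::complex). op_invertible A \<and> op_invertible B \<and> op_invertible C
       \<and> s \<noteq> 0 \<and> \<psi> = (\<lambda>x y z. s * apply_local A B C W_state x y z))"

definition in_orth_compl :: "qstate set \<Rightarrow> qstate \<Rightarrow> bool" where
  "in_orth_compl S \<psi> \<longleftrightarrow> (\<forall>u\<in>S. qinner u \<psi> = 0)"

definition unextendible_entangled_basis :: "qstate set \<Rightarrow> bool" where
  "unextendible_entangled_basis S \<longleftrightarrow>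
     (\<forall>u\<in>S. \<forall>v\<in>S. u \<noteq> v \<longrightarrow> qinner u v = 0)
   \<and> (\<forall>u\<in>S. entangled u)
   \<and> (\<exists>\<psi>. \<psi> \<noteq> (\<lambda>x y z. 0) \<and> in_orth_compl S \<psi>)
   \<and> (\<forall>\<psi>. in_orth_compl S \<psi> \<longrightarrow> \<not> entangled \<psi>)"

definition omega :: complex where
  "omega = cis (2 * pi / 3)"

definition ueb_state :: "nat \<Rightarrow> qstate" where
  "ueb_state k = (if k < 3 then
      (\<lambda>x y z. (ket False False True x y z + omega ^ k * ket False True False x y z
                 + omega ^ (2 * k) * ket True False False x y z) / complex_of_real (sqrt 3))
    else
      (\<lambda>x y z. (ket False False False x y z + omega ^ (k - 3) * ket True False True x y z
                 + omega ^ (2 * (k - 3)) * ket True True False x y z) / complex_of_real (sqrt 3)))"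

end

theory Submission
  imports Defs
begin

(* The first three states are the discrete Fourier transform, over the cube roots of unity,
   of |001>, |010>, |100>; the last three that of |000>, |101>, |110>.  Hence they are
   orthogonal, and a vector orthogonal to all six vanishes on these six kets: the complement
   is C^2 (x) |11>, which consists of product states only.  Each state arises from W by
   diagonal phase gates (preceded, for the second family, by a bit flip of the first qubit),
   so it is in the W-class.  Bi-separability is preserved by invertible local operators and
   W is not bi-separable for any cut (a 2x2 minor of each flattening is nonzero), so every
   W-class state is genuinely entangled. *)

lemma omega_cube: "omega ^ 3 = 1"
proof -
  have "omega ^ 3 = cis (real 3 * (2 * pi / 3))" unfolding omega_def by (rule DeMoivre)
  also have "real 3 * (2 * pi / 3) = 2 * pi" by simp
  finally show ?thesis by simp
qed

lemma omega_neq_0: "omega \<noteq> 0"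
  using omega_cube by auto

lemma cnj_omega: "cnj omega = omega ^ 2"
proof -
  have "cnj omega * omega = 1"
    by (simp add: omega_def cis_cnj cis_mult)
  moreover have "omega ^ 2 * omega = 1"
    using omega_cube by (simp add: power2_eq_square power3_eq_cube)
  ultimately show ?thesis
    using omega_neq_0 by (metis mult_right_cancel)
qed

lemma one_plus_omega_plus_omega_sq: "1 + omega + omega ^ 2 = 0"
proof -
  have "omega \<noteq> 1"
  proof
    assume "omega = 1"
    moreover have "Re omega = -1/2" unfolding omega_def by (simp add: cos_120)
    ultimately show False by simp
  qed
  moreover have "(omega - 1) * (1 + omega + omega ^ 2) = omega ^ 3 - 1"
    by (simp add: algebra_simps power2_eq_square power3_eq_cube)
  ultimately show ?thesis
    using omega_cube by simp
qed

lemma omega_numeral_power_reduce [simp]: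
  "numeral n \<ge> (3::nat) \<Longrightarrow> omega ^ numeral n = omega ^ (numeral n - 3)"
  by (metis le_add_diff_inverse mult_1 omega_cube power_add)

lemma dft3_eq_0:
  assumes "a + b + c = 0" and "a + omega ^ 2 * b + omega * c = 0"
    and "a + omega * b + omega ^ 2 * c = 0"
  shows "a = 0 \<and> b = 0 \<and> c = 0"
  using assms omega_cube one_plus_omega_plus_omega_sq by algebra

lemma omega_power_orthogonal:
  assumes "i < 3" "j < 3" "i \<noteq> j"
  shows "1 + cnj (omega ^ i) * omega ^ j + cnj (omega ^ (2 * i)) * omega ^ (2 * j) = 0"
proof -
  have "\<forall>i\<in>{0, 1, 2::nat}. \<forall>j\<in>{0, 1, 2}. i \<noteq> j \<longrightarrow>
      1 + cnj (omega ^ i) * omega ^ j + cnj (omega ^ (2 * i)) * omega ^ (2 * j) = 0"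
    using omega_cube one_plus_omega_plus_omega_sq by (simp add: cnj_omega) algebra
  moreover have "i \<in> {0, 1, 2}" "j \<in> {0, 1, 2}"
    using assms(1,2) by auto
  ultimately show ?thesis
    using assms(3) by blast
qed

lemma sum_UNIV_bool: "(\<Sum>x\<in>UNIV. f x) = f True + f False"
  by (simp add: UNIV_bool add.commute)

lemma bi_product_zero: "bi_product P (\<lambda>x y z. 0)"
  unfolding bi_product_def
  by (cases P) (auto intro!: exI[of _ "\<lambda>_. 0"] exI[of _ "\<lambda>_ _. 0"])

lemma bi_entangled_iff_not_bi_product: "bi_entangled P \<psi> \<longleftrightarrow> \<not> bi_product P \<psi>"
  unfolding bi_entangled_def using bi_product_zero by blast

lemma fully_product_bi_product:
  assumes "fully_product \<psi>"
  shows "bi_product P \<psi>"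
proof -
  obtain a b c where \<psi>: "\<psi> = (\<lambda>x y z. a x * b y * c z)"
    using assms unfolding fully_product_def by blast
  show ?thesis
  proof (cases P)
    case A_BC
    then show ?thesis
      unfolding bi_product_def \<psi>
      by (auto intro!: exI[of _ a] exI[of _ "\<lambda>y z. b y * c z"] simp: ac_simps)
  next
    case B_AC
    then show ?thesis
      unfolding bi_product_def \<psi>
      by (auto intro!: exI[of _ b] exI[of _ "\<lambda>x z. a x * c z"] simp: ac_simps)
  next
    case C_AB
    then show ?thesis
      unfolding bi_product_def \<psi>
      by (auto intro!: exI[of _ c] exI[of _ "\<lambda>x y. a x * b y"] simp: ac_simps)
  qed
qed

lemma genuinely_entangled_entangled: "genuinely_entangled \<psi> \<Longrightarrow> entangled \<psi>"
  unfolding genuinely_entangled_def entangled_def bi_entangled_def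
  using fully_product_bi_product by blast

lemma bi_product_A_BC_minor:
  "bi_product A_BC \<psi> \<Longrightarrow> \<psi> a b c * \<psi> a' b' c' = \<psi> a' b c * \<psi> a b' c'"
  by (auto simp: bi_product_def)

lemma bi_product_B_AC_minor:
  "bi_product B_AC \<psi> \<Longrightarrow> \<psi> a b c * \<psi> a' b' c' = \<psi> a b' c * \<psi> a' b c'"
  by (auto simp: bi_product_def)

lemma bi_product_C_AB_minor:
  "bi_product C_AB \<psi> \<Longrightarrow> \<psi> a b c * \<psi> a' b' c' = \<psi> a b c' * \<psi> a' b' c"
  by (auto simp: bi_product_def)

lemma W_state_not_bi_product: "\<not> bi_product P W_state"
proof
  assume "bi_product P W_state"
  then show False
    by (cases P)
      (auto dest: bi_product_A_BC_minor[of _ False False True True False False]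
        bi_product_B_AC_minor[of _ False False True False True False]
        bi_product_C_AB_minor[of _ False False True False True False]
        simp: W_state_def ket_def)
qed

lemma apply_local_apply_local:
  "apply_local A' B' C' (apply_local A B C \<psi>) =
     apply_local (opmul A' A) (opmul B' B) (opmul C' C) \<psi>"
  by (simp add: apply_local_def opmul_def fun_eq_iff sum_UNIV_bool algebra_simps)

lemma apply_local_id:
  "apply_local (\<lambda>i j. if i = j then 1 else 0) (\<lambda>i j. if i = j then 1 else 0)
     (\<lambda>i j. if i = j then 1 else 0) \<psi> = \<psi>"
  by (simp add: apply_local_def fun_eq_iff sum_UNIV_bool)

lemma apply_local_scale:
  "apply_local A B C (\<lambda>x y z. s * \<psi> x y z) = (\<lambda>x y z. s * apply_local A B C \<psi> x y z)"
  by (simp add: apply_local_def fun_eq_iff sum_UNIV_bool algebra_simps)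

lemma bi_product_scale:
  assumes "bi_product P \<psi>"
  shows "bi_product P (\<lambda>x y z. s * \<psi> x y z)"
  using assms unfolding bi_product_def
  by (cases P) (force simp: mult.left_commute[of s])+

lemma bi_product_apply_local:
  assumes "bi_product P \<psi>"
  shows "bi_product P (apply_local A B C \<psi>)"
proof (cases P)
  case A_BC
  then obtain a \<phi> where "\<psi> = (\<lambda>x y z. a x * \<phi> y z)"
    using assms by (auto simp: bi_product_def)
  then show ?thesis using A_BC unfolding bi_product_def
    by (auto intro!: exI[of _ "\<lambda>x. \<Sum>x'\<in>UNIV. A x x' * a x'"]
        exI[of _ "\<lambda>y z. \<Sum>y'\<in>UNIV. \<Sum>z'\<in>UNIV. B y y' * C z z' * \<phi> y' z'"]
        simp: apply_local_def fun_eq_iff sum_UNIV_bool algebra_simps)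
next
  case B_AC
  then obtain b \<phi> where "\<psi> = (\<lambda>x y z. b y * \<phi> x z)"
    using assms by (auto simp: bi_product_def)
  then show ?thesis using B_AC unfolding bi_product_def
    by (auto intro!: exI[of _ "\<lambda>y. \<Sum>y'\<in>UNIV. B y y' * b y'"]
        exI[of _ "\<lambda>x z. \<Sum>x'\<in>UNIV. \<Sum>z'\<in>UNIV. A x x' * C z z' * \<phi> x' z'"]
        simp: apply_local_def fun_eq_iff sum_UNIV_bool algebra_simps)
next
  case C_AB
  then obtain c \<phi> where "\<psi> = (\<lambda>x y z. c z * \<phi> x y)"
    using assms by (auto simp: bi_product_def)
  then show ?thesis using C_AB unfolding bi_product_def
    by (auto intro!: exI[of _ "\<lambda>z. \<Sum>z'\<in>UNIV. C z z' * c z'"]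
        exI[of _ "\<lambda>x y. \<Sum>x'\<in>UNIV. \<Sum>y'\<in>UNIV. A x x' * B y y' * \<phi> x' y'"]
        simp: apply_local_def fun_eq_iff sum_UNIV_bool algebra_simps)
qed

lemma in_W_class_bi_product:
  assumes "in_W_class \<psi>" and "bi_product P \<psi>"
  shows "bi_product P W_state"
proof -
  obtain A B C s where inv: "op_invertible A" "op_invertible B" "op_invertible C"
    and "s \<noteq> 0" and \<psi>: "\<psi> = (\<lambda>x y z. s * apply_local A B C W_state x y z)"
    using assms(1) unfolding in_W_class_def by blast
  obtain A' B' C' where "opmul A' A = (\<lambda>i j. if i = j then 1 else 0)"
    "opmul B' B = (\<lambda>i j. if i = j then 1 else 0)" "opmul C' C = (\<lambda>i j. if i = j then 1 else 0)"
    using inv unfolding op_invertible_def by blast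
  then have "apply_local A' B' C' \<psi> = (\<lambda>x y z. s * W_state x y z)"
    by (simp add: \<psi> apply_local_scale apply_local_apply_local apply_local_id)
  moreover have "bi_product P (\<lambda>x y z. inverse s * apply_local A' B' C' \<psi> x y z)"
    using assms(2) by (intro bi_product_scale bi_product_apply_local)
  ultimately show ?thesis
    using \<open>s \<noteq> 0\<close> by (simp add: mult.assoc[symmetric])
qed

lemma in_W_class_genuinely_entangled: "in_W_class \<psi> \<Longrightarrow> genuinely_entangled \<psi>"
  unfolding genuinely_entangled_def bi_entangled_iff_not_bi_product
  using in_W_class_bi_product W_state_not_bi_product by blast

definition diag_op :: "complex \<Rightarrow> qop" where
  "diag_op c = (\<lambda>i j. if i = j then (if i then c else 1) else 0)"

definition flip_op :: qop where
  "flip_op = (\<lambda>i j. if i = j then 0 else 1)"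

lemma op_invertible_diag_op: "c \<noteq> 0 \<Longrightarrow> op_invertible (diag_op c)"
  unfolding op_invertible_def
  by (rule exI[of _ "diag_op (inverse c)"])
    (auto simp: opmul_def diag_op_def sum_UNIV_bool fun_eq_iff)

lemma op_invertible_flip_op: "op_invertible flip_op"
  unfolding op_invertible_def
  by (rule exI[of _ flip_op]) (auto simp: opmul_def flip_op_def sum_UNIV_bool fun_eq_iff)

lemma ueb_state_lt_3:
  "k < 3 \<Longrightarrow> ueb_state k x y z =
     (if \<not> x \<and> \<not> y \<and> z then 1 else if \<not> x \<and> y \<and> \<not> z then omega ^ k
      else if x \<and> \<not> y \<and> \<not> z then omega ^ (2 * k) else 0) / complex_of_real (sqrt 3)"
  by (auto simp: ueb_state_def ket_def)

lemma ueb_state_ge_3: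
  "\<not> k < 3 \<Longrightarrow> ueb_state k x y z =
     (if \<not> x \<and> \<not> y \<and> \<not> z then 1 else if x \<and> \<not> y \<and> z then omega ^ (k - 3)
      else if x \<and> y \<and> \<not> z then omega ^ (2 * (k - 3)) else 0) / complex_of_real (sqrt 3)"
  by (auto simp: ueb_state_def ket_def)

lemma ueb_state_in_W_class: "in_W_class (ueb_state k)"
proof (cases "k < 3")
  case True
  then have "ueb_state k =
      apply_local (diag_op (omega ^ (2 * k))) (diag_op (omega ^ k)) (diag_op 1) W_state"
    by (auto simp: fun_eq_iff ueb_state_lt_3 apply_local_def sum_UNIV_bool W_state_def ket_def
        diag_op_def add_divide_distrib)
  then show ?thesis
    unfolding in_W_class_def
    by (intro exI[of _ 1] exI conjI) (auto intro: op_invertible_diag_op simp: omega_neq_0)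
next
  case False
  then have "ueb_state k =
      apply_local flip_op (diag_op (omega ^ (2 * (k - 3)))) (diag_op (omega ^ (k - 3))) W_state"
    by (auto simp: fun_eq_iff ueb_state_ge_3 apply_local_def sum_UNIV_bool W_state_def ket_def
        diag_op_def flip_op_def add_divide_distrib)
  then show ?thesis
    unfolding in_W_class_def
    by (intro exI[of _ 1] exI conjI)
      (auto intro: op_invertible_diag_op op_invertible_flip_op simp: omega_neq_0)
qed

lemma qinner_ueb_state_lt_3:
  "k < 3 \<Longrightarrow> qinner (ueb_state k) \<psi> =
     (\<psi> False False True + cnj (omega ^ k) * \<psi> False True False
      + cnj (omega ^ (2 * k)) * \<psi> True False False) / complex_of_real (sqrt 3)"
  by (simp add: qinner_def ueb_state_lt_3 sum_UNIV_bool add_divide_distrib)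

lemma qinner_ueb_state_ge_3:
  "\<not> k < 3 \<Longrightarrow> qinner (ueb_state k) \<psi> =
     (\<psi> False False False + cnj (omega ^ (k - 3)) * \<psi> True False True
      + cnj (omega ^ (2 * (k - 3))) * \<psi> True True False) / complex_of_real (sqrt 3)"
  by (simp add: qinner_def ueb_state_ge_3 sum_UNIV_bool add_divide_distrib)

lemma ueb_state_orthogonal:
  assumes "i < 6" "j < 6" "i \<noteq> j"
  shows "qinner (ueb_state i) (ueb_state j) = 0"
proof (cases "i < 3"; cases "j < 3")
  assume "i < 3" "j < 3"
  then show ?thesis
    using omega_power_orthogonal[of i j] assms(3)
    by (simp add: qinner_ueb_state_lt_3 ueb_state_lt_3 flip: add_divide_distrib)
next
  assume "\<not> i < 3" "\<not> j < 3"
  then show ?thesis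
    using omega_power_orthogonal[of "i - 3" "j - 3"] assms
    by (simp add: qinner_ueb_state_ge_3 ueb_state_ge_3 flip: add_divide_distrib)
qed (simp_all add: qinner_ueb_state_lt_3 qinner_ueb_state_ge_3 ueb_state_lt_3 ueb_state_ge_3)

lemma in_orth_compl_ueb_states_iff:
  "in_orth_compl (ueb_state ` {..<6}) \<psi> \<longleftrightarrow> (\<exists>a. \<psi> = (\<lambda>x y z. if y \<and> z then a x else 0))"
proof
  assume "in_orth_compl (ueb_state ` {..<6}) \<psi>"
  then have orth: "qinner (ueb_state k) \<psi> = 0" if "k < 6" for k
    using that unfolding in_orth_compl_def by blast
  have "\<psi> False False True = 0 \<and> \<psi> False True False = 0 \<and> \<psi> True False False = 0"
    by (rule dft3_eq_0)
      (use orth[of 0] orth[of 1] orth[of 2] in \<open>simp_all add: qinner_ueb_state_lt_3 cnj_omega\<close>)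
  moreover have "\<psi> False False False = 0 \<and> \<psi> True False True = 0 \<and> \<psi> True True False = 0"
    by (rule dft3_eq_0)
      (use orth[of 3] orth[of 4] orth[of 5] in \<open>simp_all add: qinner_ueb_state_ge_3 cnj_omega\<close>)
  ultimately have "\<psi> x y z = (if y \<and> z then \<psi> x True True else 0)" for x y z
    by (cases x; cases y; cases z) simp_all
  then show "\<exists>a. \<psi> = (\<lambda>x y z. if y \<and> z then a x else 0)"
    by (intro exI ext)
next
  assume "\<exists>a. \<psi> = (\<lambda>x y z. if y \<and> z then a x else 0)"
  then obtain a where \<psi>: "\<psi> = (\<lambda>x y z. if y \<and> z then a x else 0)" ..
  have "qinner (ueb_state k) \<psi> = 0" for k
    by (cases "k < 3") (simp_all add: \<psi> qinner_ueb_state_lt_3 qinner_ueb_state_ge_3)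
  then show "in_orth_compl (ueb_state ` {..<6}) \<psi>"
    unfolding in_orth_compl_def by blast
qed

lemma fully_product_tensor_ket11: "fully_product (\<lambda>x y z. if y \<and> z then a x else 0)"
  unfolding fully_product_def
  by (intro exI[of _ a] exI[of _ "\<lambda>y. if y then 1 else 0"]) (auto simp: fun_eq_iff)

theorem theorem1:
  shows "(\<forall>i<6. \<forall>j<6. i \<noteq> j \<longrightarrow> qinner (ueb_state i) (ueb_state j) = 0)
    \<and> (\<forall>i<6. genuinely_entangled (ueb_state i) \<and> in_W_class (ueb_state i))
    \<and> unextendible_entangled_basis (ueb_state ` {..<6})
    \<and> (\<forall>P \<psi>. in_orth_compl (ueb_state ` {..<6}) \<psi> \<longrightarrow> \<not> bi_entangled P \<psi>)"
proof -
  have orthogonal: "\<forall>i<6. \<forall>j<6. i \<noteq> j \<longrightarrow> qinner (ueb_state i) (ueb_state j) = 0"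
    using ueb_state_orthogonal by blast
  have genuine: "genuinely_entangled (ueb_state i)" for i
    using ueb_state_in_W_class in_W_class_genuinely_entangled by blast
  have complement_product: "fully_product \<psi>" if "in_orth_compl (ueb_state ` {..<6}) \<psi>" for \<psi>
    using that fully_product_tensor_ket11 by (auto simp: in_orth_compl_ueb_states_iff)
  have "in_orth_compl (ueb_state ` {..<6}) (ket True True True)"
    unfolding in_orth_compl_ueb_states_iff
    by (intro exI[of _ "\<lambda>x. if x then 1 else 0"]) (auto simp: ket_def fun_eq_iff)
  moreover have "ket True True True \<noteq> (\<lambda>x y z. 0)"
    by (auto simp: ket_def fun_eq_iff)
  ultimately have "unextendible_entangled_basis (ueb_state ` {..<6})"
    unfolding unextendible_entangled_basis_def
    using orthogonal genuine genuinely_entangled_entangled complement_product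
    by (auto simp: entangled_def)
  then show ?thesis
    using orthogonal genuine ueb_state_in_W_class complement_product fully_product_bi_product
    by (auto simp: bi_entangled_iff_not_bi_product)
qed

end
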